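(* Assume $\bar L>0$ and consider the $l$-th cycle of RPF-SFISTA. Then: (a) the cycle stops (either by a restart in step (iv) or by termination in step (v)) after at most $$\left\lceil(1+Q_l)\log^+_1\!\left(\frac{C_{\bar\mu}(z_{l-1})\,\zeta_l^2}{\chi\hat\epsilon^2}\right)+1\right\rceil+\left\lceil\frac{\log^+_0\big(2\bar L/((1-\chi)\underline M_l)\big)}{\log\beta}\right\rceil$$ ACG iterations/resolvent evaluations; (b) if the cycle terminates in step (v), its output $(y,v,\xi,L)$ satisfies $\phi(\xi)\le\min\{\phi(z_0),\phi(y)\}$ and $\bar M_0\le L\le\max\{\bar M_0,\kappa\bar L\}$, and $(y,v)$ is an $\hat\epsilon$-optimal solution; (c) if $\mu_{l-1}\in(0,\bar\mu]$, then the cycle never restarts and terminates in step (v) with an output as in (b), within the number of ACG iterations/resolvent evaluations given in (a).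
   Context: Setup. Let $f:\mathbb R^n\to\mathbb R$ be convex and differentiable with $\|\nabla f(z')-\nabla f(z)\|\le\bar L\|z'-z\|$ for all $z,z'\in\mathbb R^n$ (some $\bar L\ge0$). Let $h:\mathbb R^n\to(-\infty,\infty]$ be proper, lower semicontinuous and convex with domain $\mathcal H$. Let $\phi:=f+h$ be $\bar\mu$-strongly convex for some $\bar\mu>0$, with (unique) minimizer $z^*$. Write $\ell_f(u;x):=f(x)+\langle\nabla f(x),u-x\rangle$. Define $C_{\bar\mu}(z):=\frac{8}{\bar\mu}[\phi(z)-\phi(z^* )]$ and $\kappa:=2\beta/(1-\chi)$. For $t>0$, $b\ge0$ let $\log^+_b(t):=\max\{\log t,b\}$. A pair $(y,v)$ is an $\hat\epsilon$-optimal solution if $v\in\nabla f(y)+\partial h(y)$ and $\|v\|\le\hat\epsilon$. RPF-SFISTA. Parameters $\chi\in(0,1)$, $\beta>1$; inputs $\mu_0>0$, $\bar M_0>0$, $z_0\in\mathcal H$, $\hat\epsilon>0$. The method runs in cycles $l=1,2,\dots$. At the start of cycle $l$: choose $\underline M_l\in[\max\{\bar M_{l-1}/4,\bar M_0\},\bar M_{l-1}]$ (so $\underline M_1=\bar M_0$), set $\mu:=\mu_{l-1}$, $x_0:=z_{l-1}$, $\xi_0:=y_0:=x_0$, $A_0:=0$, $\tau_0:=1$, $L_0:=\underline M_l$. Then for $j=1,2,\dots$: (i) set $L_j:=L_{j-1}$; (ii) compute $a_{j-1}=\frac{\tau_{j-1}+\sqrt{\tau_{j-1}^2+4\tau_{j-1}A_{j-1}L_j}}{2L_j}$,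 $\tilde x_{j-1}=\frac{A_{j-1}y_{j-1}+a_{j-1}x_{j-1}}{A_{j-1}+a_{j-1}}$, $y_j=\arg\min_{u}\{\ell_f(u;\tilde x_{j-1})+h(u)+\frac{L_j}{2}\|u-\tilde x_{j-1}\|^2\}$; if $f(y_j)\le\ell_f(y_j;\tilde x_{j-1})+\frac{(1-\chi)L_j}{4}\|y_j-\tilde x_{j-1}\|^2$ go to (iii), otherwise replace $L_j$ by $\beta L_j$ and repeat (ii); (iii) set $\xi_j:=y_j$ if $\phi(y_j)\le\phi(\xi_{j-1})$ and $\xi_j:=\xi_{j-1}$ otherwise; $A_j:=A_{j-1}+a_{j-1}$; $\tau_j:=\tau_{j-1}+a_{j-1}\mu/2$; $s_j:=L_j(\tilde x_{j-1}-y_j)$; $x_j:=\tau_j^{-1}[\mu a_{j-1}y_j/2+\tau_{j-1}x_{j-1}-a_{j-1}s_j]$; $v_j:=\nabla f(y_j)-\nabla f(\tilde x_{j-1})+s_j$; (iv) if $\|\xi_j-x_0\|^2<\chi A_jL_j\|y_j-\tilde x_{j-1}\|^2$, the cycle ends with a restart: set $z_l:=\xi_j$, $\bar M_l:=L_j$, $\mu_l:=\mu/2$ and start cycle $l+1$; (v) otherwise, if $\|v_j\|\le\hat\epsilon$, stop and output $(y,v,\xi,L):=(y_j,v_j,\xi_j,L_j)$; else go to iteration $j+1$. Each computation of a point $y_j$ in (ii) (including repetitions in the line search) counts as one ACG iteration/resolvent evaluation. Cycle quantities: $\zeta_l:=\bar L+\max\{\underline M_l,\kappa\bar L\}$ and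 $Q_l:=2\sqrt2\sqrt{\max\{\underline M_l,\kappa\bar L\}/\mu_{l-1}}$. *)

theory Defs
  imports "HOL-Analysis.Analysis"
begin

text \<open>The nonsmooth part h : R^n -> (-infinity, infinity] is represented by its (nonempty)
domain H and its real values on H (h is taken to be +infinity outside H).\<close>

definition strongly_convex_on :: "'a::real_inner set \<Rightarrow> real \<Rightarrow> ('a \<Rightarrow> real) \<Rightarrow> bool" where
  "strongly_convex_on H m g \<longleftrightarrow> convex H \<and>
     (\<forall>x\<in>H. \<forall>y\<in>H. \<forall>t\<in>{0..1}.
        g ((1 - t) *\<^sub>R x + t *\<^sub>R y) \<le> (1 - t) * g x + t * g y - m / 2 * t * (1 - t) * (norm (x - y))\<^sup>2)"

definition subdiff :: "('a::real_inner \<Rightarrow> real) \<Rightarrow> 'a set \<Rightarrow> 'a \<Rightarrow> 'a set" where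
  "subdiff h H y = {w. y \<in> H \<and> (\<forall>u\<in>H. h y + inner w (u - y) \<le> h u)}"

definition logp :: "real \<Rightarrow> real \<Rightarrow> real" where
  "logp b t = max (ln t) b"

definition lin_f :: "('a::real_inner \<Rightarrow> real) \<Rightarrow> ('a \<Rightarrow> 'a) \<Rightarrow> 'a \<Rightarrow> 'a \<Rightarrow> real" where
  "lin_f f gf u x = f x + inner (gf x) (u - x)"

definition prox_step :: "('a::real_inner \<Rightarrow> real) \<Rightarrow> ('a \<Rightarrow> 'a) \<Rightarrow> ('a \<Rightarrow> real) \<Rightarrow> 'a set \<Rightarrow> real \<Rightarrow> 'a \<Rightarrow> 'a" where
  "prox_step f gf h H L xt =
     (THE u. u \<in> H \<and> (\<forall>w\<in>H. lin_f f gf u xt + h u + L / 2 * (norm (u - xt))\<^sup>2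
                              \<le> lin_f f gf w xt + h w + L / 2 * (norm (w - xt))\<^sup>2))"

text \<open>State of a cycle after each ACG iteration (= each resolvent evaluation).
  CRun Lt A tau x y xi : iteration in progress, Lt is the next trial value of L_j,
    (A,tau,x,y,xi) = (A_{j-1},tau_{j-1},x_{j-1},y_{j-1},xi_{j-1});
  CRestart xi L : the cycle ended with a restart in step (iv), z_l = xi, Mbar_l = L;
  CStop y v xi L : the method stopped in step (v) with output (y,v,xi,L).\<close>
datatype 'a cstate =
    CRun real real real 'a 'a 'a
  | CRestart 'a real
  | CStop 'a 'a 'a real

definition cycle_step ::
  "('a::real_inner \<Rightarrow> real) \<Rightarrow> ('a \<Rightarrow> 'a) \<Rightarrow> ('a \<Rightarrow> real) \<Rightarrow> 'a set \<Rightarrow>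
   real \<Rightarrow> real \<Rightarrow> real \<Rightarrow> 'a \<Rightarrow> real \<Rightarrow> 'a cstate \<Rightarrow> 'a cstate" where
  "cycle_step f gf h H chi beta mu x0 eps st =
    (case st of
      CRun Lt A tau x y xi \<Rightarrow>
        (let a = (tau + sqrt (tau\<^sup>2 + 4 * tau * A * Lt)) / (2 * Lt);
             xt = (1 / (A + a)) *\<^sub>R (A *\<^sub>R y + a *\<^sub>R x);
             yn = prox_step f gf h H Lt xt
         in if f yn \<le> lin_f f gf yn xt + (1 - chi) * Lt / 4 * (norm (yn - xt))\<^sup>2 then
              (let xin = (if f yn + h yn \<le> f xi + h xi then yn else xi);
                   An = A + a;
                   taun = tau + a * mu / 2;
                   s = Lt *\<^sub>R (xt - yn);
                   xn = (1 / taun) *\<^sub>R ((mu * a / 2) *\<^sub>R yn + tau *\<^sub>R x - a *\<^sub>R s);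
                   v = gf yn - gf xt + s
               in if (norm (xin - x0))\<^sup>2 < chi * An * Lt * (norm (yn - xt))\<^sup>2 then CRestart xin Lt
                  else if norm v \<le> eps then CStop yn v xin Lt
                  else CRun Lt An taun xn yn xin)
            else CRun (beta * Lt) A tau x y xi)
    | CRestart z L \<Rightarrow> CRestart z L
    | CStop y v xi L \<Rightarrow> CStop y v xi L)"

definition cycle_run ::
  "('a::real_inner \<Rightarrow> real) \<Rightarrow> ('a \<Rightarrow> 'a) \<Rightarrow> ('a \<Rightarrow> real) \<Rightarrow> 'a set \<Rightarrow>
   real \<Rightarrow> real \<Rightarrow> real \<Rightarrow> real \<Rightarrow> 'a \<Rightarrow> real \<Rightarrow> nat \<Rightarrow> 'a cstate" where
  "cycle_run f gf h H chi beta eps mu x0 Mlow k =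
     ((cycle_step f gf h H chi beta mu x0 eps) ^^ k) (CRun Mlow 0 1 x0 x0 x0)"

end

theory Submission
  imports Defs
begin

text \<open>
  Backtracking multiplies the trial
  value \<open>L\<close> by \<open>\<beta>\<close>, and by the descent lemma it can only happen while \<open>L < 2 Lbar / (1 - \<chi>)\<close>.
  An accepted iteration multiplies \<open>A L\<close> by at least \<open>1 + 2 / Q\<close>, since the step size satisfies
  \<open>L a\<^sup>2 = (1 + \<mu> A / 2) (A + a)\<close>. As long as the cycle neither restarts nor stops, the restart
  test gives \<open>\<chi> A L |y - xt|\<^sup>2 \<le> |\<xi> - x\<^sub>0|\<^sup>2 \<le> C(x\<^sub>0)\<close> by quadratic growth of \<open>\<phi>\<close>, while
  \<open>|v| \<le> \<zeta> |y - xt|\<close>; hence the residual test fires once \<open>A L \<ge> C \<zeta>\<^sup>2 / (\<chi> \<epsilon>\<^sup>2)\<close>. This bounds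
  the number of accepted iterations logarithmically.

  If \<open>\<mu> \<le> mubar\<close>, the estimate-sequence inequality
  \<open>A (\<phi>(y) + \<chi> L / 2 |y - xt|\<^sup>2) + \<tau> / 2 |u - x|\<^sup>2 \<le> A \<phi>(u) + |u - x\<^sub>0|\<^sup>2 / 2\<close>
  of the accelerated method holds, and evaluating it at \<open>u = \<xi>\<close> shows that the restart test never
  fires.
\<close>

lemma le_of_forall_le_add_mult:
  fixes c d e :: real
  assumes "\<And>t. 0 < t \<Longrightarrow> t \<le> 1 \<Longrightarrow> c \<le> d + t * e"
  shows "c \<le> d"
proof (rule ccontr)
  assume "\<not> c \<le> d"
  show False
  proof (cases "e \<le> 0")
    case True
    then show ?thesis using assms[of 1] \<open>\<not> c \<le> d\<close> by auto
  next
    case False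
    define t where "t = min 1 ((c - d) / (2 * e))"
    have "0 < t" "t \<le> 1" using False \<open>\<not> c \<le> d\<close> by (auto simp: t_def)
    have "t * e \<le> (c - d) / (2 * e) * e"
      using False unfolding t_def by (intro mult_right_mono) auto
    also have "\<dots> = (c - d) / 2" using False by simp
    finally show False using assms[OF \<open>0 < t\<close> \<open>t \<le> 1\<close>] \<open>\<not> c \<le> d\<close> by simp
  qed
qed

lemma ln_one_plus_ge_div:
  fixes q :: real
  assumes "q > 0"
  shows "q / (1 + q) \<le> ln (1 + q)"
proof -
  have "ln (1 / (1 + q)) \<le> 1 / (1 + q) - 1" using assms by (intro ln_le_minus_one) auto
  moreover have "ln (1 / (1 + q)) = - ln (1 + q)" using assms by (simp add: ln_div)
  moreover have "1 / (1 + q) - 1 = - (q / (1 + q))" using assms by (simp add: field_simps)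
  ultimately show ?thesis by linarith
qed

lemma le_power_of_logp_le:
  fixes Q T :: real
  assumes Q: "Q > 0" and n: "(1 + Q) * logp 1 T \<le> real n"
  shows "T \<le> (1 + 2 / Q) ^ n"
proof (cases "T \<le> 0")
  case True
  then show ?thesis using Q by (smt (verit) divide_pos_pos zero_less_power)
next
  case False
  have base: "1 + 2 / Q > 0" using Q by (simp add: add_pos_pos)
  have "2 / (Q + 2) \<le> ln (1 + 2 / Q)"
    using ln_one_plus_ge_div[of "2 / Q"] Q by (simp add: field_simps)
  then have "(1 + Q) * (2 / (Q + 2)) \<le> (1 + Q) * ln (1 + 2 / Q)" using Q by (intro mult_left_mono) auto
  moreover have "1 \<le> (1 + Q) * (2 / (Q + 2))" using Q by (simp add: field_simps)
  ultimately have rate: "1 \<le> (1 + Q) * ln (1 + 2 / Q)" by linarith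
  have lp: "ln T \<le> logp 1 T" "1 \<le> logp 1 T" by (auto simp: logp_def)
  have "ln T \<le> logp 1 T * ((1 + Q) * ln (1 + 2 / Q))"
    using mult_left_mono[OF rate, of "logp 1 T"] lp by linarith
  also have "\<dots> = ((1 + Q) * logp 1 T) * ln (1 + 2 / Q)" by simp
  also have "\<dots> \<le> real n * ln (1 + 2 / Q)"
    using n base Q by (intro mult_right_mono) auto
  also have "\<dots> = ln ((1 + 2 / Q) ^ n)" using base by (simp add: ln_realpow)
  finally show ?thesis using False base by simp
qed

lemma inner_add_quadratic_ge:
  fixes e p :: "'a::real_inner"
  assumes "L > 0"
  shows "- (norm e)\<^sup>2 / (2 * L) \<le> inner e p + L / 2 * (norm p)\<^sup>2"
proof -
  have "0 \<le> (norm (e + L *\<^sub>R p))\<^sup>2" by simp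
  also have "\<dots> = (norm e)\<^sup>2 + 2 * L * inner e p + L\<^sup>2 * (norm p)\<^sup>2"
    unfolding power2_norm_eq_inner
    by (simp add: inner_add_left inner_add_right inner_commute power2_eq_square algebra_simps)
  finally show ?thesis using assms by (simp add: field_simps power2_eq_square)
qed

lemma norm_midpoint_power2:
  fixes p q :: "'a::real_inner"
  shows "(norm ((1/2) *\<^sub>R p + (1/2) *\<^sub>R q))\<^sup>2
       = ((norm p)\<^sup>2 + (norm q)\<^sup>2) / 2 - (norm (p - q))\<^sup>2 / 4"
  by (simp add: power2_norm_eq_inner inner_add_left inner_add_right inner_diff_left
      inner_diff_right inner_commute field_simps)

lemma quadratic_completion:
  fixes p q r u m :: "'a::real_inner"
  assumes T: "T = t0 + t1" "T \<noteq> 0" and m: "T *\<^sub>R m = t0 *\<^sub>R p + t1 *\<^sub>R q - r"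
  shows "t0/2 * (norm (u - p))\<^sup>2 + t1/2 * (norm (u - q))\<^sup>2 + inner r u
       = t0/2 * (norm (m - p))\<^sup>2 + t1/2 * (norm (m - q))\<^sup>2 + inner r m + T/2 * (norm (u - m))\<^sup>2"
proof -
  have r: "r = t0 *\<^sub>R p + t1 *\<^sub>R q - T *\<^sub>R m" using m by (simp add: algebra_simps)
  have F: "t0/2 * (norm (v - p))\<^sup>2 + t1/2 * (norm (v - q))\<^sup>2 + inner r v
        = T/2 * inner v v - T * inner m v + (t0/2 * inner p p + t1/2 * inner q q)" for v
    unfolding r power2_norm_eq_inner
    by (simp add: inner_diff_left inner_diff_right inner_add_left inner_commute T(1) algebra_simps)
  have N: "T/2 * (norm (u - m))\<^sup>2 = T/2 * inner u u - T * inner m u + T/2 * inner m m"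
    unfolding power2_norm_eq_inner
    by (simp add: inner_diff_left inner_diff_right inner_commute algebra_simps)
  show ?thesis unfolding F N by (simp add: algebra_simps)
qed

lemma acg_stepsize_root:
  fixes L tau A :: real
  assumes L: "L > 0" and tau: "tau > 0" and A: "A \<ge> 0"
    and a: "a = (tau + sqrt (tau\<^sup>2 + 4 * tau * A * L)) / (2 * L)"
  shows "a > 0" and "L * a\<^sup>2 = tau * (A + a)"
proof -
  define r where "r = sqrt (tau\<^sup>2 + 4 * tau * A * L)"
  have disc: "0 \<le> tau\<^sup>2 + 4 * tau * A * L" using L tau A by simp
  have r0: "r \<ge> 0" and r2: "r\<^sup>2 = tau\<^sup>2 + 4 * tau * A * L" using disc by (simp_all add: r_def)
  have a2: "2 * L * a = tau + r" using L by (simp add: a r_def[symmetric])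
  have "2 * L * a > 0" using a2 tau r0 by linarith
  then show "a > 0" using L by (simp add: zero_less_mult_iff)
  have "4 * L * (L * a\<^sup>2) = (2 * L * a)\<^sup>2" by (simp add: power2_eq_square)
  also have "\<dots> = (tau + r)\<^sup>2" by (simp add: a2)
  also have "\<dots> = 2 * tau * (tau + r) + 4 * tau * A * L"
    using r2 by (simp add: power2_eq_square algebra_simps)
  also have "\<dots> = 4 * L * (tau * (A + a))" unfolding a2[symmetric] by (simp add: algebra_simps)
  finally show "L * a\<^sup>2 = tau * (A + a)" using L by simp
qed

lemma acg_stepsize_lower_bound:
  fixes L M mu A a :: real
  assumes L: "0 < L" "L \<le> M" and mu: "mu > 0" and A: "A \<ge> 0" and a: "a > 0"
    and root: "L * a\<^sup>2 = (1 + mu * A / 2) * (A + a)"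
  shows "2 * A / (2 * sqrt 2 * sqrt (M / mu)) \<le> a"
proof -
  define Q where "Q = 2 * sqrt 2 * sqrt (M / mu)"
  have Qp: "Q > 0" using L mu by (simp add: Q_def)
  have Q2: "Q\<^sup>2 = 8 * (M / mu)" using L mu by (simp add: Q_def power_mult_distrib)
  have "(2 * A / Q)\<^sup>2 = mu * A\<^sup>2 / (2 * M)" using Q2 Qp mu L by (simp add: power_divide field_simps)
  also have "\<dots> \<le> mu * A\<^sup>2 / (2 * L)" using L mu A by (intro divide_left_mono) auto
  also have "\<dots> \<le> a\<^sup>2"
  proof -
    have "(1 + mu * A / 2) * (A + a) = mu * A\<^sup>2 / 2 + (A + a + mu * A * a / 2)"
      by (simp add: power2_eq_square algebra_simps)
    moreover have "0 \<le> A + a + mu * A * a / 2" using A a mu by simp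
    ultimately have "mu * A\<^sup>2 / 2 \<le> (1 + mu * A / 2) * (A + a)" by linarith
    then show ?thesis using root L by (simp add: field_simps)
  qed
  finally show ?thesis unfolding Q_def[symmetric] by (rule power2_le_imp_le) (use a in simp)
qed

text \<open>The linear terms recombine at \<open>xt\<close>; what is left, linear in \<open>u - x\<close>, is absorbed by
  the proximal term, and this is exactly where \<open>L a\<^sup>2 = \<tau> (A + a)\<close> is needed.\<close>
lemma acg_aggregation_bound:
  fixes x y xt yn u s :: "'a::real_inner"
  assumes tau: "tau > 0" and root: "L * a\<^sup>2 = tau * (A + a)"
    and xt: "(A + a) *\<^sub>R xt = A *\<^sub>R y + a *\<^sub>R x" and s: "s = L *\<^sub>R (xt - yn)"
  shows "(A + a) * (c + L / 2 * (norm (yn - xt))\<^sup>2)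
       \<le> A * (c + inner s (y - yn)) + a * (c + inner s (u - yn)) + tau / 2 * (norm (u - x))\<^sup>2"
proof -
  define nd where "nd = (norm (yn - xt))\<^sup>2"
  have "inner s ((A + a) *\<^sub>R xt) = inner s (A *\<^sub>R y + a *\<^sub>R x)" using xt by simp
  then have lin: "A * inner s (y - yn) + a * inner s (u - yn)
      = (A + a) * inner s (xt - yn) + inner (a *\<^sub>R s) (u - x)"
    by (simp add: inner_diff_right inner_add_right algebra_simps)
  have s_xt: "inner s (xt - yn) = L * nd"
    unfolding s nd_def by (simp add: power2_norm_eq_inner norm_minus_commute[of yn xt] inner_commute)
  have "(norm (a *\<^sub>R s))\<^sup>2 = (L * a\<^sup>2) * L * nd"
    unfolding s nd_def by (simp add: power_mult_distrib norm_minus_commute[of yn xt] power2_eq_square)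
  then have "(norm (a *\<^sub>R s))\<^sup>2 / (2 * tau) = (A + a) * L * nd / 2"
    unfolding root using tau by (simp add: field_simps)
  then have absorb: "- ((A + a) * L * nd / 2) \<le> inner (a *\<^sub>R s) (u - x) + tau / 2 * (norm (u - x))\<^sup>2"
    using inner_add_quadratic_ge[OF tau, of "a *\<^sub>R s" "u - x"] by (metis minus_divide_left)
  have "(A + a) * (c + L / 2 * nd) = (A + a) * c + (A + a) * (L * nd) + - ((A + a) * L * nd / 2)"
    by (simp add: field_simps)
  also have "\<dots> \<le> (A + a) * c + (A + a) * (L * nd) + (inner (a *\<^sub>R s) (u - x) + tau / 2 * (norm (u - x))\<^sup>2)"
    using absorb by (rule add_left_mono)
  also have "\<dots> = A * (c + inner s (y - yn)) + a * (c + inner s (u - yn)) + tau / 2 * (norm (u - x))\<^sup>2"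
    using lin s_xt by (simp add: algebra_simps)
  finally show ?thesis unfolding nd_def .
qed

lemma acg_growth_step:
  fixes Lt M mu A a Q :: real
  assumes Lt: "0 < Lt" "Lt \<le> M" and mu: "mu > 0" and A: "A \<ge> 0" and a: "a > 0"
    and root: "Lt * a\<^sup>2 = (1 + mu * A / 2) * (A + a)"
    and Q: "Q = 2 * sqrt 2 * sqrt (M / mu)"
    and start: "s = 0 \<Longrightarrow> A = 0" and prev: "0 < s \<Longrightarrow> (1 + 2 / Q) ^ (s - 1) \<le> A * Lt"
  shows "(1 + 2 / Q) ^ s \<le> (A + a) * Lt"
proof (cases "s = 0")
  case True
  then have "Lt * a * a = a" using start root by (simp add: power2_eq_square)
  then show ?thesis using True start a by (simp add: mult.commute)
next
  case False
  have Qp: "Q > 0" using Q Lt mu by simp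
  have "(1 + 2 / Q) ^ s = (1 + 2 / Q) * (1 + 2 / Q) ^ (s - 1)"
    using False by (simp flip: power_Suc)
  also have "\<dots> \<le> (1 + 2 / Q) * (A * Lt)"
    using prev False Qp by (intro mult_left_mono) (auto simp: add_nonneg_nonneg)
  also have "\<dots> = A * Lt + (2 * A / Q) * Lt" by (simp add: algebra_simps)
  also have "\<dots> \<le> A * Lt + a * Lt"
    using acg_stepsize_lower_bound[OF Lt mu A a root] Lt Q by (intro add_left_mono mult_right_mono) auto
  finally show ?thesis by (simp add: algebra_simps)
qed

lemma backtracking_steps_bound:
  fixes Ml beta B :: real and F :: nat
  assumes Ml: "Ml > 0" and beta: "beta > 1" and B: "B > 0" and small: "Ml * beta ^ (F - 1) < B"
    and F: "F > 0"
  shows "int F \<le> ceiling (logp 0 (B / Ml) / ln beta)"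
proof -
  have "beta ^ (F - 1) < B / Ml" using small Ml by (simp add: pos_less_divide_eq mult.commute)
  then have "real (F - 1) * ln beta < ln (B / Ml)"
    using beta Ml B by (simp add: ln_realpow[symmetric] ln_less_cancel_iff)
  then have "real (F - 1) < logp 0 (B / Ml) / ln beta"
    using beta by (simp add: logp_def pos_less_divide_eq)
  also have "\<dots> \<le> of_int (ceiling (logp 0 (B / Ml) / ln beta))" by (rule le_of_int_ceiling)
  finally show ?thesis using F by linarith
qed

lemma norm_le_of_scaled_bound:
  fixes v d :: "'a::real_normed_vector"
  assumes v: "norm v \<le> Z * norm d" and Z: "0 \<le> Z" and c: "chi * P * (norm d)\<^sup>2 \<le> C"
    and T: "C * Z\<^sup>2 / (chi * eps\<^sup>2) \<le> P" and P: "P > 0" and chi: "chi > 0" and eps: "eps > 0"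
  shows "norm v \<le> eps"
proof -
  have "Z\<^sup>2 * (norm d)\<^sup>2 * (chi * P) \<le> Z\<^sup>2 * C" using mult_left_mono[OF c, of "Z\<^sup>2"]
    by (simp add: algebra_simps)
  also have "\<dots> = chi * eps\<^sup>2 * (C * Z\<^sup>2 / (chi * eps\<^sup>2))" using chi eps by (simp add: field_simps)
  also have "\<dots> \<le> chi * eps\<^sup>2 * P" using T chi eps by (intro mult_left_mono) auto
  finally have "(Z * norm d)\<^sup>2 \<le> eps\<^sup>2"
    using chi P by (simp add: power_mult_distrib mult_le_cancel_right_pos algebra_simps)
  moreover have "(norm v)\<^sup>2 \<le> (Z * norm d)\<^sup>2" using v by (intro power_mono) auto
  ultimately have "(norm v)\<^sup>2 \<le> eps\<^sup>2" by linarith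
  then show ?thesis by (rule power2_le_imp_le) (use eps in simp)
qed

locale lipschitz_gradient =
  fixes f :: "'a::real_inner \<Rightarrow> real" and gf :: "'a \<Rightarrow> 'a" and Lbar :: real
  assumes has_derivative_gf: "\<And>x. (f has_derivative (\<lambda>d. inner (gf x) d)) (at x)"
    and gf_lipschitz: "\<And>x x'. norm (gf x' - gf x) \<le> Lbar * norm (x' - x)"
begin

lemma has_real_derivative_along_line:
  "((\<lambda>t. f (x + t *\<^sub>R d)) has_real_derivative inner (gf (x + t *\<^sub>R d)) d) (at t)"
proof -
  have "((\<lambda>t. x + t *\<^sub>R d) has_derivative (\<lambda>s. s *\<^sub>R d)) (at t)"
    by (auto intro!: derivative_eq_intros)
  from has_derivative_compose[OF this has_derivative_gf]
  show ?thesis unfolding has_field_derivative_def o_def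
    by (rule has_derivative_eq_rhs) (auto simp: fun_eq_iff)
qed

lemma taylor_remainder_abs_le:
  "\<bar>f y - f x - inner (gf x) (y - x)\<bar> \<le> Lbar / 2 * (norm (y - x))\<^sup>2"
proof -
  define d where "d = y - x"
  define g where "g c t = f (x + t *\<^sub>R d) - t * inner (gf x) d + c * Lbar / 2 * t\<^sup>2 * (norm d)\<^sup>2"
    for c t :: real
  have g': "(g c has_real_derivative
      (inner (gf (x + t *\<^sub>R d)) d - inner (gf x) d + c * Lbar * t * (norm d)\<^sup>2)) (at t)" for c t
    unfolding g_def by (rule derivative_eq_intros has_real_derivative_along_line refl | simp)+
  have slope: "\<bar>inner (gf (x + t *\<^sub>R d)) d - inner (gf x) d\<bar> \<le> Lbar * t * (norm d)\<^sup>2"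
    if "0 \<le> t" for t
  proof -
    have "\<bar>inner (gf (x + t *\<^sub>R d)) d - inner (gf x) d\<bar> \<le> norm (gf (x + t *\<^sub>R d) - gf x) * norm d"
      unfolding inner_diff_left[symmetric] by (rule Cauchy_Schwarz_ineq2)
    also have "\<dots> \<le> Lbar * norm (t *\<^sub>R d) * norm d"
      using gf_lipschitz[where x = x and x' = "x + t *\<^sub>R d"] by (intro mult_right_mono) auto
    finally show ?thesis using that by (simp add: power2_eq_square)
  qed
  obtain t1 where t1: "0 < t1" "g (-1) 1 - g (-1) 0 =
      inner (gf (x + t1 *\<^sub>R d)) d - inner (gf x) d - Lbar * t1 * (norm d)\<^sup>2"
    using MVT2[of 0 1 "g (-1)", OF _ g'] by auto
  obtain t2 where t2: "0 < t2" "g 1 1 - g 1 0 =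
      inner (gf (x + t2 *\<^sub>R d)) d - inner (gf x) d + Lbar * t2 * (norm d)\<^sup>2"
    using MVT2[of 0 1 "g 1", OF _ g'] by auto
  have "g (-1) 1 \<le> g (-1) 0" "g 1 0 \<le> g 1 1" using t1 t2 slope[of t1] slope[of t2] by auto
  then show ?thesis unfolding g_def d_def by (intro abs_leI) (simp_all add: algebra_simps)
qed

lemma descent_lemma: "f y \<le> f x + inner (gf x) (y - x) + Lbar / 2 * (norm (y - x))\<^sup>2"
  using abs_le_D1[OF taylor_remainder_abs_le[of y x]] by linarith

lemma gradient_residual_norm_le:
  assumes "L \<ge> 0"
  shows "norm (gf y - gf xt + L *\<^sub>R (xt - y)) \<le> (Lbar + L) * norm (y - xt)"
proof -
  have "norm (gf y - gf xt + L *\<^sub>R (xt - y)) \<le> norm (gf y - gf xt) + norm (L *\<^sub>R (xt - y))"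
    by (rule norm_triangle_ineq)
  also have "\<dots> \<le> Lbar * norm (y - xt) + L * norm (y - xt)"
    using gf_lipschitz[where x = xt and x' = y] assms by (simp add: norm_minus_commute)
  finally show ?thesis by (simp add: algebra_simps)
qed

end

locale convex_lipschitz_gradient = lipschitz_gradient +
  assumes convex_f: "convex_on UNIV f"
begin

lemma gradient_inequality: "f x + inner (gf x) (y - x) \<le> f y"
proof -
  define d where "d = y - x"
  have "inner (gf x) d \<le> f y - f x + t * (Lbar / 2 * (norm d)\<^sup>2)" if "0 < t" "t \<le> 1" for t
  proof -
    have "f (x + t *\<^sub>R d) \<le> (1 - t) * f x + t * f y"
      using convex_onD[OF convex_f, of t x y] that by (simp add: d_def algebra_simps)
    moreover have "f x + inner (gf x) (t *\<^sub>R d) - Lbar / 2 * (norm (t *\<^sub>R d))\<^sup>2 \<le> f (x + t *\<^sub>R d)"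
      using abs_le_D2[OF taylor_remainder_abs_le[of "x + t *\<^sub>R d" x]] by simp
    ultimately have "t * (inner (gf x) d - t * (Lbar / 2 * (norm d)\<^sup>2)) \<le> t * (f y - f x)"
      using that by (simp add: power2_eq_square algebra_simps)
    then have "inner (gf x) d - t * (Lbar / 2 * (norm d)\<^sup>2) \<le> f y - f x"
      using mult_le_cancel_left_pos[OF \<open>0 < t\<close>] by blast
    then show ?thesis by linarith
  qed
  then have "inner (gf x) d \<le> f y - f x" by (rule le_of_forall_le_add_mult)
  then show ?thesis by (simp add: d_def)
qed

end

locale composite_problem = convex_lipschitz_gradient f gf Lbar
  for f :: "'a::euclidean_space \<Rightarrow> real" and gf Lbar +
  fixes h :: "'a \<Rightarrow> real" and H :: "'a set" and mubar :: real and zstar :: 'a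
  assumes H_ne: "H \<noteq> {}" and H_convex: "convex H" and h_convex: "convex_on H h"
    and h_sublevel_closed: "\<And>c. closed {x \<in> H. h x \<le> c}"
    and mubar_pos: "mubar > 0"
    and phi_strongly_convex: "strongly_convex_on H mubar (\<lambda>x. f x + h x)"
    and zstar_in: "zstar \<in> H" and zstar_min: "\<And>x. x \<in> H \<Longrightarrow> f zstar + h zstar \<le> f x + h x"
begin

definition phi :: "'a \<Rightarrow> real" where "phi x = f x + h x"

lemma segment_in_H: "x \<in> H \<Longrightarrow> y \<in> H \<Longrightarrow> 0 \<le> t \<Longrightarrow> t \<le> 1 \<Longrightarrow> (1 - t) *\<^sub>R x + t *\<^sub>R y \<in> H"
  using H_convex by (simp add: convex_def)

lemma phi_strongly_convexD:
  assumes "x \<in> H" "y \<in> H" "0 \<le> t" "t \<le> 1"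
  shows "phi ((1 - t) *\<^sub>R x + t *\<^sub>R y)
       \<le> (1 - t) * phi x + t * phi y - mubar / 2 * t * (1 - t) * (norm (x - y))\<^sup>2"
  using phi_strongly_convex assms unfolding strongly_convex_on_def phi_def by auto

lemma quadratic_growth:
  assumes "w \<in> H"
  shows "mubar / 2 * (norm (w - zstar))\<^sup>2 \<le> phi w - phi zstar"
proof (rule le_of_forall_le_add_mult)
  fix t :: real assume t: "0 < t" "t \<le> 1"
  have "phi zstar \<le> phi ((1 - t) *\<^sub>R zstar + t *\<^sub>R w)"
    using zstar_min[OF segment_in_H[OF zstar_in assms]] t by (simp add: phi_def)
  also have "\<dots> \<le> (1 - t) * phi zstar + t * phi w - mubar / 2 * t * (1 - t) * (norm (zstar - w))\<^sup>2"
    using phi_strongly_convexD[OF zstar_in assms] t by simp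
  finally have "t * (mubar / 2 * (1 - t) * (norm (w - zstar))\<^sup>2) \<le> t * (phi w - phi zstar)"
    by (simp add: norm_minus_commute algebra_simps)
  then have "mubar / 2 * (1 - t) * (norm (w - zstar))\<^sup>2 \<le> phi w - phi zstar"
    using mult_le_cancel_left_pos[OF \<open>0 < t\<close>] by blast
  moreover have "mubar / 2 * (1 - t) * (norm (w - zstar))\<^sup>2
      = mubar / 2 * (norm (w - zstar))\<^sup>2 - t * (mubar / 2 * (norm (w - zstar))\<^sup>2)"
    by (simp add: field_simps)
  ultimately show "mubar / 2 * (norm (w - zstar))\<^sup>2
      \<le> phi w - phi zstar + t * (mubar / 2 * (norm (w - zstar))\<^sup>2)"
    by linarith
qed

lemma dist_sublevel_le:
  assumes "w \<in> H" "x0 \<in> H" "phi w \<le> phi x0"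
  shows "(norm (w - x0))\<^sup>2 \<le> 8 / mubar * (phi x0 - phi zstar)"
proof -
  have "norm (w - x0) \<le> norm (w - zstar) + norm (x0 - zstar)"
    using norm_triangle_ineq4[of "w - zstar" "x0 - zstar"] by simp
  then have "(norm (w - x0))\<^sup>2 \<le> (norm (w - zstar) + norm (x0 - zstar))\<^sup>2"
    by (intro power_mono) auto
  also have "\<dots> \<le> 2 * (norm (w - zstar))\<^sup>2 + 2 * (norm (x0 - zstar))\<^sup>2"
    using zero_le_power2[of "norm (w - zstar) - norm (x0 - zstar)"]
    by (simp add: power2_diff power2_sum)
  also have "\<dots> \<le> 8 / mubar * (phi x0 - phi zstar)"
    using quadratic_growth[OF assms(1)] quadratic_growth[OF assms(2)] assms(3) mubar_pos
    by (simp add: field_simps)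
  finally show ?thesis .
qed

text \<open>Optimality of \<open>zstar\<close> makes \<open>-\<nabla>f(zstar)\<close> a subgradient of \<open>h\<close> there.\<close>
lemma h_ge_affine_minorant:
  assumes "u \<in> H"
  shows "h zstar - inner (gf zstar) (u - zstar) \<le> h u"
proof -
  define d where "d = u - zstar"
  have "h zstar - inner (gf zstar) d \<le> h u"
  proof (rule le_of_forall_le_add_mult)
    fix t :: real assume t: "0 < t" "t \<le> 1"
    have "f zstar + h zstar \<le> f (zstar + t *\<^sub>R d) + h ((1 - t) *\<^sub>R zstar + t *\<^sub>R u)"
      using zstar_min[OF segment_in_H[OF zstar_in assms]] t by (simp add: d_def algebra_simps)
    also have "\<dots> \<le> (f zstar + inner (gf zstar) (t *\<^sub>R d) + Lbar / 2 * (norm (t *\<^sub>R d))\<^sup>2)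
                    + ((1 - t) * h zstar + t * h u)"
      using descent_lemma[of "zstar + t *\<^sub>R d" zstar] convex_onD[OF h_convex, of t zstar u]
        zstar_in assms t
      by (intro add_mono) auto
    finally have "t * (h zstar - inner (gf zstar) d) \<le> t * (h u + t * (Lbar / 2 * (norm d)\<^sup>2))"
      using t by (simp add: power2_eq_square algebra_simps)
    then show "h zstar - inner (gf zstar) d \<le> h u + t * (Lbar / 2 * (norm d)\<^sup>2)"
      using mult_le_cancel_left_pos[OF \<open>0 < t\<close>] by blast
  qed
  then show ?thesis by (simp add: d_def)
qed

definition prox_model :: "real \<Rightarrow> 'a \<Rightarrow> 'a \<Rightarrow> real" where
  "prox_model L xt u = lin_f f gf u xt + h u + L / 2 * (norm (u - xt))\<^sup>2"

lemma prox_model_midpoint: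
  assumes "y1 \<in> H" "y2 \<in> H"
  shows "2 * prox_model L xt ((1/2) *\<^sub>R y1 + (1/2) *\<^sub>R y2)
       \<le> prox_model L xt y1 + prox_model L xt y2 - L / 4 * (norm (y1 - y2))\<^sup>2"
proof -
  have h_mid: "h ((1/2) *\<^sub>R y1 + (1/2) *\<^sub>R y2) \<le> (h y1 + h y2) / 2"
    using convex_onD[OF h_convex, of "1/2" y1 y2] assms by simp
  have "(1/2) *\<^sub>R y1 + (1/2) *\<^sub>R y2 - xt = (1/2) *\<^sub>R (y1 - xt) + (1/2) *\<^sub>R (y2 - xt)"
    by (simp add: algebra_simps flip: scaleR_add_left)
  then have sq: "(norm ((1/2) *\<^sub>R y1 + (1/2) *\<^sub>R y2 - xt))\<^sup>2
      = ((norm (y1 - xt))\<^sup>2 + (norm (y2 - xt))\<^sup>2) / 2 - (norm (y1 - y2))\<^sup>2 / 4"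
    by (simp add: norm_midpoint_power2)
  have lin: "lin_f f gf ((1/2) *\<^sub>R y1 + (1/2) *\<^sub>R y2) xt = (lin_f f gf y1 xt + lin_f f gf y2 xt) / 2"
    unfolding lin_f_def by (simp add: inner_diff_right inner_add_right field_simps)
  show ?thesis unfolding prox_model_def lin sq using h_mid by (simp add: field_simps)
qed

lemma prox_model_lower_bound:
  assumes "L > 0" "w \<in> H"
  shows "f xt + h zstar - inner (gf zstar) (xt - zstar) - (norm (gf xt - gf zstar))\<^sup>2 / (2 * L)
       \<le> prox_model L xt w"
proof -
  have "f xt + inner (gf xt) (w - xt) + (h zstar - inner (gf zstar) (w - zstar))
      + L / 2 * (norm (w - xt))\<^sup>2 \<le> prox_model L xt w"
    using h_ge_affine_minorant[OF assms(2)] unfolding prox_model_def lin_f_def by simp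
  moreover have "inner (gf xt) (w - xt) - inner (gf zstar) (w - zstar)
      = inner (gf xt - gf zstar) (w - xt) - inner (gf zstar) (xt - zstar)"
    by (simp add: inner_diff_left inner_diff_right)
  ultimately show ?thesis
    using inner_add_quadratic_ge[OF assms(1), of "gf xt - gf zstar" "w - xt"] by linarith
qed

lemma prox_minimizing_sequence_Cauchy:
  assumes L: "L > 0" and uH: "\<And>n. u n \<in> H"
    and lb: "\<And>w. w \<in> H \<Longrightarrow> m \<le> prox_model L xt w"
    and uP: "\<And>n. prox_model L xt (u n) < m + 1 / (real n + 1)"
  shows "Cauchy u"
proof (rule CauchyI)
  have dist_le: "(norm (u n - u k))\<^sup>2 \<le> 8 / L * (1 / (real M + 1))" if "M \<le> n" "M \<le> k" for n k M
  proof -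
    have "(1/2) *\<^sub>R u n + (1/2) *\<^sub>R u k \<in> H" using segment_in_H[OF uH uH, of "1/2"] by simp
    then have "2 * m \<le> prox_model L xt (u n) + prox_model L xt (u k) - L / 4 * (norm (u n - u k))\<^sup>2"
      using lb prox_model_midpoint[OF uH uH, of L xt n k] by fastforce
    moreover have "1 / (real n + 1) \<le> 1 / (real M + 1)" "1 / (real k + 1) \<le> 1 / (real M + 1)"
      using that by (auto simp: frac_le)
    ultimately have "L / 4 * (norm (u n - u k))\<^sup>2 \<le> 2 * (1 / (real M + 1))"
      using uP[of n] uP[of k] by linarith
    from mult_left_mono[OF this, of "4 / L"] show ?thesis using L by simp
  qed
  fix e :: real assume e: "0 < e"
  obtain M :: nat where "8 / (L * e\<^sup>2) < real M" using reals_Archimedean2 by blast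
  then have M: "8 / (L * e\<^sup>2) < real M + 1" by linarith
  have "0 < L * e\<^sup>2" using L e by simp
  with M have "8 < (real M + 1) * (L * e\<^sup>2)" by (simp add: pos_divide_less_eq)
  moreover have "0 < L * (real M + 1)" using L by simp
  ultimately have "8 / (L * (real M + 1)) < e\<^sup>2" by (simp add: pos_divide_less_eq algebra_simps)
  then have "8 / L * (1 / (real M + 1)) < e\<^sup>2" by simp
  then have "\<forall>n\<ge>M. \<forall>k\<ge>M. norm (u n - u k) < e"
    using dist_le e by (smt (verit) power_less_imp_less_base norm_ge_zero)
  then show "\<exists>M. \<forall>n\<ge>M. \<forall>k\<ge>M. norm (u n - u k) < e" by blast
qed

lemma prox_minimizing_sequence_limit:
  assumes uH: "\<And>n. u n \<in> H" and uP: "\<And>n. prox_model L xt (u n) < m + 1 / (real n + 1)"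
    and lim: "u \<longlonglongrightarrow> w"
  shows "w \<in> H" and "prox_model L xt w \<le> m"
proof -
  define g where "g v = lin_f f gf v xt + L / 2 * (norm (v - xt))\<^sup>2" for v
  have "(\<lambda>n. g (u n)) \<longlonglongrightarrow> g w" unfolding g_def lin_f_def by (intro tendsto_intros lim)
  have sublevel: "w \<in> {x \<in> H. h x \<le> m + 2 * t - g w}" if t: "0 < t" for t
  proof (rule Lim_in_closed_set[OF h_sublevel_closed _ trivial_limit_sequentially lim])
    have "eventually (\<lambda>n. dist (g (u n)) (g w) < t) sequentially"
      using \<open>(\<lambda>n. g (u n)) \<longlonglongrightarrow> g w\<close> t by (rule tendstoD)
    moreover have "eventually (\<lambda>n. 1 / (real n + 1) < t) sequentially"
      using tendstoD[OF LIMSEQ_inverse_real_of_nat t]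
      by eventually_elim (simp add: inverse_eq_divide add.commute)
    ultimately show "eventually (\<lambda>n. u n \<in> {x \<in> H. h x \<le> m + 2 * t - g w}) sequentially"
    proof eventually_elim
      case (elim n)
      then show ?case using uP[of n] uH[of n] by (simp add: prox_model_def g_def dist_real_def)
    qed
  qed
  then show "w \<in> H" using zero_less_one by blast
  show "prox_model L xt w \<le> m"
  proof (rule le_of_forall_le_add_mult[where e = 2])
    fix t :: real assume "0 < t" "t \<le> 1"
    then show "prox_model L xt w \<le> m + t * 2" using sublevel[of t] by (simp add: prox_model_def g_def)
  qed
qed

lemma prox_model_has_minimizer:
  assumes L: "L > 0"
  shows "\<exists>y\<in>H. \<forall>w\<in>H. prox_model L xt y \<le> prox_model L xt w"
proof -
  define m where "m = Inf (prox_model L xt ` H)"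
  have bdd: "bdd_below (prox_model L xt ` H)"
    using prox_model_lower_bound[OF L] by (auto simp: bdd_below_def)
  have lb: "m \<le> prox_model L xt w" if "w \<in> H" for w
    unfolding m_def using bdd that by (auto intro!: cInf_lower)
  have "\<exists>u\<in>H. prox_model L xt u < m + 1 / (real n + 1)" for n
    using cInf_less_iff[OF _ bdd, of "m + 1 / (real n + 1)"] H_ne by (simp add: m_def)
  then obtain u where uH: "\<And>n. u n \<in> H" and uP: "\<And>n. prox_model L xt (u n) < m + 1 / (real n + 1)"
    by metis
  obtain w where "u \<longlonglongrightarrow> w"
    using prox_minimizing_sequence_Cauchy[OF L uH lb uP] Cauchy_convergent_iff convergent_def by blast
  with prox_minimizing_sequence_limit[OF uH uP this] lb show ?thesis by force
qed

lemma prox_model_minimizer_unique: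
  assumes L: "L > 0"
    and y1: "y1 \<in> H" "\<And>w. w \<in> H \<Longrightarrow> prox_model L xt y1 \<le> prox_model L xt w"
    and y2: "y2 \<in> H" "\<And>w. w \<in> H \<Longrightarrow> prox_model L xt y2 \<le> prox_model L xt w"
  shows "y1 = y2"
proof (rule ccontr)
  assume "y1 \<noteq> y2"
  then have "0 < L / 4 * (norm (y1 - y2))\<^sup>2" using L by simp
  moreover have mid: "(1/2) *\<^sub>R y1 + (1/2) *\<^sub>R y2 \<in> H"
    using segment_in_H[OF y1(1) y2(1), of "1/2"] by simp
  ultimately show False
    using prox_model_midpoint[OF y1(1) y2(1), of L xt] y1(2)[OF mid] y2(2)[OF mid] by linarith
qed

lemma prox_step_minimizes:
  assumes L: "L > 0"
  shows "prox_step f gf h H L xt \<in> H"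
    and "\<And>w. w \<in> H \<Longrightarrow> prox_model L xt (prox_step f gf h H L xt) \<le> prox_model L xt w"
proof -
  obtain y where y: "y \<in> H" "\<forall>w\<in>H. prox_model L xt y \<le> prox_model L xt w"
    using prox_model_has_minimizer[OF L] by blast
  have "prox_step f gf h H L xt = y"
    unfolding prox_step_def prox_model_def[symmetric]
  proof (rule the_equality)
    fix u assume "u \<in> H \<and> (\<forall>w\<in>H. prox_model L xt u \<le> prox_model L xt w)"
    then show "u = y" using prox_model_minimizer_unique[OF L _ _ y(1)] y(2) by blast
  qed (use y in simp)
  with y show "prox_step f gf h H L xt \<in> H"
    and "\<And>w. w \<in> H \<Longrightarrow> prox_model L xt (prox_step f gf h H L xt) \<le> prox_model L xt w"
    by auto
qed

lemma prox_step_subgradient: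
  assumes L: "L > 0" and y: "y = prox_step f gf h H L xt" and u: "u \<in> H"
  shows "h y + inner (L *\<^sub>R (xt - y) - gf xt) (u - y) \<le> h u"
proof -
  have yH: "y \<in> H" using prox_step_minimizes(1)[OF L] y by simp
  define e where "e = u - y"
  have "- inner (gf xt + L *\<^sub>R (y - xt)) e + h y \<le> h u"
  proof (rule le_of_forall_le_add_mult)
    fix t :: real assume t: "0 < t" "t \<le> 1"
    have seg: "(1 - t) *\<^sub>R y + t *\<^sub>R u = y + t *\<^sub>R e" by (simp add: e_def algebra_simps)
    have "(1 - t) *\<^sub>R y + t *\<^sub>R u \<in> H" using segment_in_H[OF yH u] t by simp
    then have "prox_model L xt y \<le> prox_model L xt (y + t *\<^sub>R e)"
      using prox_step_minimizes(2)[OF L, where xt = xt] y seg by simp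
    moreover have "prox_model L xt (y + t *\<^sub>R e) \<le> lin_f f gf y xt + t * inner (gf xt) e
        + ((1 - t) * h y + t * h u)
        + L / 2 * ((norm (y - xt))\<^sup>2 + 2 * t * inner (y - xt) e + t\<^sup>2 * (norm e)\<^sup>2)"
    proof -
      have "lin_f f gf (y + t *\<^sub>R e) xt = lin_f f gf y xt + t * inner (gf xt) e"
        unfolding lin_f_def by (simp add: inner_add_right inner_diff_right algebra_simps)
      moreover have "(norm (y + t *\<^sub>R e - xt))\<^sup>2
          = (norm (y - xt))\<^sup>2 + 2 * t * inner (y - xt) e + t\<^sup>2 * (norm e)\<^sup>2"
        unfolding power2_norm_eq_inner
        by (simp add: inner_add_left inner_add_right inner_diff_left inner_diff_right
            inner_commute power2_eq_square algebra_simps)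
      moreover have "h (y + t *\<^sub>R e) \<le> (1 - t) * h y + t * h u"
        using convex_onD[OF h_convex, of t y u] yH u t seg by simp
      ultimately show ?thesis unfolding prox_model_def by simp
    qed
    ultimately have "t * (- inner (gf xt + L *\<^sub>R (y - xt)) e + h y)
        \<le> t * (h u + t * (L / 2 * (norm e)\<^sup>2))"
      unfolding prox_model_def by (simp add: inner_add_left algebra_simps power2_eq_square)
    then show "- inner (gf xt + L *\<^sub>R (y - xt)) e + h y \<le> h u + t * (L / 2 * (norm e)\<^sup>2)"
      using mult_le_cancel_left_pos[OF \<open>0 < t\<close>] by blast
  qed
  moreover have "inner (L *\<^sub>R (xt - y) - gf xt) e = - inner (gf xt + L *\<^sub>R (y - xt)) e"
    by (simp add: inner_add_left inner_diff_left algebra_simps)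
  ultimately show ?thesis by (simp add: e_def)
qed

lemma prox_residual_in_subdiff:
  assumes "L > 0" and y: "y = prox_step f gf h H L xt"
  shows "(gf y - gf xt + L *\<^sub>R (xt - y)) - gf y \<in> subdiff h H y"
  using prox_step_minimizes(1)[OF assms(1)] prox_step_subgradient[OF assms] y
  unfolding subdiff_def by simp

text \<open>Strong convexity is evaluated at the midpoint of \<open>u\<close> and \<open>y\<close>, which costs half of the
  modulus.\<close>
lemma phi_ge_lower_model:
  assumes yH: "y \<in> H" and sg: "\<And>u. u \<in> H \<Longrightarrow> h y + inner (s - gf xt) (u - y) \<le> h u"
    and ls: "f y \<le> f xt + inner (gf xt) (y - xt) + K" and u: "u \<in> H"
  shows "phi y - 2 * K + inner s (u - y) + mubar / 4 * (norm (u - y))\<^sup>2 \<le> phi u"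
proof -
  define w where "w = (1 - 1/2) *\<^sub>R u + (1/2) *\<^sub>R y"
  have wH: "w \<in> H" using segment_in_H[OF u yH, of "1/2"] by (simp add: w_def)
  have sc: "phi w \<le> (1 - 1/2) * phi u + (1/2) * phi y - mubar / 2 * (1/2) * (1 - 1/2) * (norm (u - y))\<^sup>2"
    unfolding w_def by (rule phi_strongly_convexD[OF u yH]) auto
  have e1: "w - y = (1/2) *\<^sub>R (u - y)" by (simp add: w_def algebra_simps flip: scaleR_add_left)
  have e2: "w - xt = (y - xt) + (1/2) *\<^sub>R (u - y)" by (simp flip: e1)
  have "f xt + inner (gf xt) (y - xt) + h y + (1/2) * inner s (u - y) \<le> phi w"
    using gradient_inequality[of xt w] sg[OF wH] unfolding phi_def e1 e2
    by (simp add: inner_add_right inner_diff_left algebra_simps)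
  then show ?thesis using sc ls unfolding phi_def by (simp add: field_simps)
qed

definition potential_bound :: "'a \<Rightarrow> real \<Rightarrow> real \<Rightarrow> 'a \<Rightarrow> real \<Rightarrow> bool" where
  "potential_bound x0 A tau x b \<longleftrightarrow>
     (\<forall>u\<in>H. b + tau / 2 * (norm (u - x))\<^sup>2 \<le> A * phi u + 1/2 * (norm (u - x0))\<^sup>2)"

lemma potential_bound_step:
  assumes mu: "0 \<le> mu" "mu \<le> mubar" and Lt: "Lt > 0" and A: "A \<ge> 0" and tau: "tau > 0"
    and a: "a > 0" and root: "Lt * a\<^sup>2 = tau * (A + a)"
    and xt: "(A + a) *\<^sub>R xt = A *\<^sub>R y + a *\<^sub>R x"
    and yH: "y \<in> H" and ynH: "yn \<in> H" and s: "s = Lt *\<^sub>R (xt - yn)"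
    and sg: "\<And>u. u \<in> H \<Longrightarrow> h yn + inner (s - gf xt) (u - yn) \<le> h u"
    and ls: "f yn \<le> lin_f f gf yn xt + (1 - chi) * Lt / 4 * (norm (yn - xt))\<^sup>2"
    and P: "potential_bound x0 A tau x (A * phi y)"
    and taun: "taun = tau + a * mu / 2"
    and xn: "xn = (1 / taun) *\<^sub>R ((mu * a / 2) *\<^sub>R yn + tau *\<^sub>R x - a *\<^sub>R s)"
  shows "potential_bound x0 (A + a) taun xn ((A + a) * (phi yn + chi * Lt / 2 * (norm (yn - xt))\<^sup>2))"
proof -
  define c where "c = phi yn - (1 - chi) * Lt / 2 * (norm (yn - xt))\<^sup>2"
  define gam where "gam u = c + inner s (u - yn) + mu / 4 * (norm (u - yn))\<^sup>2" for u
  define Gam where "Gam u = A * phi y + tau / 2 * (norm (u - x))\<^sup>2 + a * gam u" for u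
  have gam_le: "gam u \<le> phi u" if "u \<in> H" for u
  proof -
    have "phi yn - 2 * ((1 - chi) * Lt / 4 * (norm (yn - xt))\<^sup>2) + inner s (u - yn)
        + mubar / 4 * (norm (u - yn))\<^sup>2 \<le> phi u"
      using phi_ge_lower_model[OF ynH sg _ that] ls unfolding lin_f_def by blast
    moreover have "mu / 4 * (norm (u - yn))\<^sup>2 \<le> mubar / 4 * (norm (u - yn))\<^sup>2"
      using mu by (intro mult_right_mono) auto
    ultimately show ?thesis unfolding gam_def c_def by (simp add: field_simps)
  qed
  have gam_lin: "c + inner s (v - yn) \<le> gam v" for v using mu by (simp add: gam_def)
  have taun_pos: "taun > 0" using taun tau a mu by (simp add: add_pos_nonneg)
  have "taun *\<^sub>R xn = tau *\<^sub>R x + (a * mu / 2) *\<^sub>R yn - a *\<^sub>R s"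
    using taun_pos by (simp add: xn algebra_simps)
  then have Gam_split: "Gam u = Gam xn + taun / 2 * (norm (u - xn))\<^sup>2" for u
    using quadratic_completion[of taun tau "a * mu / 2" xn x yn "a *\<^sub>R s"] taun taun_pos
    unfolding Gam_def gam_def by (simp add: inner_diff_right algebra_simps)
  have "phi yn + chi * Lt / 2 * (norm (yn - xt))\<^sup>2 = c + Lt / 2 * (norm (yn - xt))\<^sup>2"
    unfolding c_def by (simp add: field_simps)
  then have "(A + a) * (phi yn + chi * Lt / 2 * (norm (yn - xt))\<^sup>2)
      \<le> A * (c + inner s (y - yn)) + a * (c + inner s (xn - yn)) + tau / 2 * (norm (xn - x))\<^sup>2"
    using acg_aggregation_bound[OF tau root xt s, of c xn] by simp
  also have "\<dots> \<le> Gam xn"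
    using mult_left_mono[OF order_trans[OF gam_lin gam_le[OF yH]] A]
      mult_left_mono[OF gam_lin[of xn], of a] a
    unfolding Gam_def by linarith
  finally have low: "(A + a) * (phi yn + chi * Lt / 2 * (norm (yn - xt))\<^sup>2) \<le> Gam xn" .
  show ?thesis unfolding potential_bound_def
  proof
    fix u assume u: "u \<in> H"
    have "Gam u \<le> A * phi u + 1/2 * (norm (u - x0))\<^sup>2 + a * phi u"
      using P u mult_left_mono[OF gam_le[OF u], of a] a
      unfolding potential_bound_def Gam_def by (smt (verit))
    then show "(A + a) * (phi yn + chi * Lt / 2 * (norm (yn - xt))\<^sup>2) + taun / 2 * (norm (u - xn))\<^sup>2
        \<le> (A + a) * phi u + 1/2 * (norm (u - x0))\<^sup>2"
      using low Gam_split[of u] by (simp add: algebra_simps)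
  qed
qed

lemma potential_bound_sublevel:
  assumes "potential_bound x0 A tau x (A * (phi y + c))" and "0 \<le> tau" and "0 \<le> A"
    and "w \<in> H" and "phi w \<le> phi y"
  shows "2 * (A * c) \<le> (norm (w - x0))\<^sup>2"
proof -
  have "A * (phi y + c) \<le> A * phi w + 1/2 * (norm (w - x0))\<^sup>2"
    using assms(1,2,4) unfolding potential_bound_def
    by (smt (verit) divide_nonneg_nonneg mult_nonneg_nonneg zero_le_power2)
  moreover have "A * phi w \<le> A * phi y" using assms(3,5) by (simp add: mult_left_mono)
  ultimately show ?thesis by (simp add: algebra_simps)
qed

lemma potential_bound_mono:
  "potential_bound x0 A tau x b \<Longrightarrow> b' \<le> b \<Longrightarrow> potential_bound x0 A tau x b'"
  unfolding potential_bound_def by force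

end

locale rpf_cycle = composite_problem f gf Lbar h H mubar zstar
  for f :: "'a::euclidean_space \<Rightarrow> real" and gf Lbar h H mubar zstar +
  fixes chi beta eps :: real
  assumes Lbar_pos: "Lbar > 0" and chi_pos: "0 < chi" and chi_less_1: "chi < 1"
    and beta_gt_1: "beta > 1" and eps_pos: "eps > 0"
begin

definition kappa :: real where "kappa = 2 * beta / (1 - chi)"

definition Lmax :: "real \<Rightarrow> real" where "Lmax Ml = max Ml (kappa * Lbar)"

definition Qc :: "real \<Rightarrow> real \<Rightarrow> real" where "Qc mu Ml = 2 * sqrt 2 * sqrt (Lmax Ml / mu)"

definition accel_budget :: "real \<Rightarrow> 'a \<Rightarrow> real \<Rightarrow> int" where
  "accel_budget mu x0 Ml = ceiling ((1 + Qc mu Ml)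
     * logp 1 (8 / mubar * (phi x0 - phi zstar) * (Lbar + Lmax Ml)\<^sup>2 / (chi * eps\<^sup>2)) + 1)"

definition backtrack_budget :: "real \<Rightarrow> int" where
  "backtrack_budget Ml = ceiling (logp 0 (2 * Lbar / ((1 - chi) * Ml)) / ln beta)"

text \<open>After \<open>k\<close> ACG iterations, \<open>F\<close> of them were rejected by the line search (each multiplying
  the trial value \<open>Lt\<close> by \<open>beta\<close>) and \<open>s\<close> were accepted (each multiplying \<open>A Lt\<close> by at least
  \<open>1 + 2 / Q\<close>).\<close>
definition iterations_within_budget :: "real \<Rightarrow> 'a \<Rightarrow> real \<Rightarrow> nat \<Rightarrow> real \<Rightarrow> real \<Rightarrow> bool" where
  "iterations_within_budget mu x0 Ml k Lt A \<longleftrightarrow> (\<exists>F s. k = F + s \<and> Lt = Ml * beta ^ F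
     \<and> (0 < F \<longrightarrow> Ml * beta ^ (F - 1) < 2 * Lbar / (1 - chi))
     \<and> (s = 0 \<longrightarrow> A = 0) \<and> (0 < s \<longrightarrow> (1 + 2 / Qc mu Ml) ^ (s - 1) \<le> A * Lt)
     \<and> int s < accel_budget mu x0 Ml)"

definition run_inv :: "real \<Rightarrow> 'a \<Rightarrow> real \<Rightarrow> nat \<Rightarrow> real \<Rightarrow> real \<Rightarrow> real \<Rightarrow> 'a \<Rightarrow> 'a \<Rightarrow> 'a \<Rightarrow> bool" where
  "run_inv mu x0 Ml k Lt A tau x y xi \<longleftrightarrow> iterations_within_budget mu x0 Ml k Lt A
     \<and> 0 \<le> A \<and> tau = 1 + mu * A / 2 \<and> y \<in> H \<and> xi \<in> H \<and> phi xi \<le> phi x0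
     \<and> (mu \<le> mubar \<longrightarrow> potential_bound x0 A tau x (A * phi y))"

fun cycle_inv :: "real \<Rightarrow> 'a \<Rightarrow> real \<Rightarrow> nat \<Rightarrow> 'a cstate \<Rightarrow> bool" where
  "cycle_inv mu x0 Ml k (CRun Lt A tau x y xi) = run_inv mu x0 Ml k Lt A tau x y xi"
| "cycle_inv mu x0 Ml k (CRestart z L) \<longleftrightarrow>
     z \<in> H \<and> phi z \<le> phi x0 \<and> Ml \<le> L \<and> L \<le> Lmax Ml \<and> \<not> mu \<le> mubar"
| "cycle_inv mu x0 Ml k (CStop y v xi L) \<longleftrightarrow>
     y \<in> H \<and> xi \<in> H \<and> phi xi \<le> phi x0 \<and> phi xi \<le> phi y \<and> Ml \<le> L \<and> L \<le> Lmax Ml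
     \<and> v - gf y \<in> subdiff h H y \<and> norm v \<le> eps"

lemma Qc_pos: "0 < mu \<Longrightarrow> 0 < Ml \<Longrightarrow> 0 < Qc mu Ml"
  unfolding Qc_def Lmax_def by simp

lemma accel_budget_ge_1:
  assumes "0 < mu" "0 < Ml"
  shows "1 \<le> accel_budget mu x0 Ml"
proof -
  define T where "T = 8 / mubar * (phi x0 - phi zstar) * (Lbar + Lmax Ml)\<^sup>2 / (chi * eps\<^sup>2)"
  have "0 \<le> (1 + Qc mu Ml) * logp 1 T" using Qc_pos[OF assms] by (simp add: logp_def)
  then show ?thesis unfolding accel_budget_def T_def[symmetric] by (simp add: le_ceiling_iff)
qed

lemma backtrack_budget_nonneg: "0 \<le> backtrack_budget Ml"
proof -
  have "0 \<le> logp 0 (2 * Lbar / ((1 - chi) * Ml)) / ln beta" using beta_gt_1 by (simp add: logp_def)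
  then show ?thesis unfolding backtrack_budget_def by linarith
qed

lemma trial_value_bounds:
  assumes Ml: "Ml > 0" and "iterations_within_budget mu x0 Ml k Lt A"
  shows "Ml \<le> Lt" and "Lt \<le> Lmax Ml"
proof -
  obtain F where Lt: "Lt = Ml * beta ^ F" and F: "0 < F \<longrightarrow> Ml * beta ^ (F - 1) < 2 * Lbar / (1 - chi)"
    using assms(2) unfolding iterations_within_budget_def by blast
  show "Ml \<le> Lt" using Lt Ml beta_gt_1 by simp
  show "Lt \<le> Lmax Ml"
  proof (cases F)
    case 0
    then show ?thesis using Lt by (simp add: Lmax_def)
  next
    case (Suc G)
    have "Lt = beta * (Ml * beta ^ G)" using Lt Suc by simp
    also have "\<dots> \<le> beta * (2 * Lbar / (1 - chi))" using F Suc beta_gt_1 by (intro mult_left_mono) auto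
    also have "\<dots> = kappa * Lbar" by (simp add: kappa_def)
    finally show ?thesis by (simp add: Lmax_def)
  qed
qed

lemma iterations_le_budget:
  assumes Ml: "Ml > 0" and "iterations_within_budget mu x0 Ml k Lt A"
  shows "int k < backtrack_budget Ml + accel_budget mu x0 Ml"
proof -
  obtain F s where k: "k = F + s" and F: "0 < F \<longrightarrow> Ml * beta ^ (F - 1) < 2 * Lbar / (1 - chi)"
    and s: "int s < accel_budget mu x0 Ml"
    using assms(2) unfolding iterations_within_budget_def by blast
  have "int F \<le> backtrack_budget Ml"
  proof (cases "F = 0")
    case False
    have "Ml * beta ^ (F - 1) < 2 * Lbar / (1 - chi)" using F False by simp
    then have "Ml * beta ^ (F - 1) * (1 - chi) < 2 * Lbar" using chi_less_1 by (simp add: pos_less_divide_eq)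
    then have "((1 - chi) * Ml) * beta ^ (F - 1) < 2 * Lbar" by (simp add: algebra_simps)
    from backtracking_steps_bound[OF _ beta_gt_1 _ this] False Ml chi_less_1 Lbar_pos
    show ?thesis unfolding backtrack_budget_def by simp
  qed (use backtrack_budget_nonneg in simp)
  then show ?thesis using k s by linarith
qed

lemma cycle_inv_init:
  assumes "0 < mu" "0 < Ml" "x0 \<in> H"
  shows "cycle_inv mu x0 Ml 0 (CRun Ml 0 1 x0 x0 x0)"
  using assms accel_budget_ge_1[OF assms(1,2), of x0]
  by (auto simp: run_inv_def iterations_within_budget_def potential_bound_def)

lemma line_search_rejection_bound:
  assumes "\<not> f yn \<le> lin_f f gf yn xt + (1 - chi) * Lt / 4 * (norm (yn - xt))\<^sup>2"
  shows "Lt < 2 * Lbar / (1 - chi)"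
proof (rule ccontr)
  assume "\<not> Lt < 2 * Lbar / (1 - chi)"
  then have "Lbar / 2 \<le> (1 - chi) * Lt / 4" using chi_less_1 by (simp add: field_simps)
  then have "Lbar / 2 * (norm (yn - xt))\<^sup>2 \<le> (1 - chi) * Lt / 4 * (norm (yn - xt))\<^sup>2"
    by (intro mult_right_mono) auto
  then show False using assms descent_lemma[of yn xt] unfolding lin_f_def by linarith
qed

lemma run_inv_backtrack:
  assumes Ml: "0 < Ml" and "run_inv mu x0 Ml k Lt A tau x y xi" and small: "Lt < 2 * Lbar / (1 - chi)"
  shows "run_inv mu x0 Ml (Suc k) (beta * Lt) A tau x y xi"
proof -
  obtain F s where k: "k = F + s" and Lt: "Lt = Ml * beta ^ F"
    and s: "s = 0 \<longrightarrow> A = 0" "0 < s \<longrightarrow> (1 + 2 / Qc mu Ml) ^ (s - 1) \<le> A * Lt"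
    "int s < accel_budget mu x0 Ml"
    using assms(2) unfolding run_inv_def iterations_within_budget_def by blast
  have "A * Lt \<le> A * (beta * Lt)"
    using assms(2) beta_gt_1 Ml unfolding run_inv_def Lt by (intro mult_left_mono) auto
  then have "iterations_within_budget mu x0 Ml (Suc k) (beta * Lt) A"
    unfolding iterations_within_budget_def using k Lt small s
    by (intro exI[of _ "Suc F"] exI[of _ s]) auto
  with assms(2) show ?thesis unfolding run_inv_def by blast
qed

lemma residual_small_after_budget:
  fixes v d :: 'a
  assumes mu: "0 < mu" and Ml: "0 < Ml" and budget: "accel_budget mu x0 Ml \<le> int (Suc s)"
    and grow: "(1 + 2 / Qc mu Ml) ^ s \<le> An * Lt" and An: "0 < An" and Lt: "0 < Lt"
    and v: "norm v \<le> (Lbar + Lmax Ml) * norm d"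
    and near: "chi * (An * Lt) * (norm d)\<^sup>2 \<le> 8 / mubar * (phi x0 - phi zstar)"
  shows "norm v \<le> eps"
proof -
  define T where "T = 8 / mubar * (phi x0 - phi zstar) * (Lbar + Lmax Ml)\<^sup>2 / (chi * eps\<^sup>2)"
  have "(1 + Qc mu Ml) * logp 1 T \<le> real s"
    using budget unfolding accel_budget_def T_def[symmetric] ceiling_le_iff by simp
  then have "T \<le> An * Lt" using le_power_of_logp_le[OF Qc_pos[OF mu Ml]] grow by fastforce
  moreover have "0 \<le> Lbar + Lmax Ml" using Lbar_pos Ml by (simp add: Lmax_def)
  ultimately show ?thesis
    using norm_le_of_scaled_bound[OF v _ near _ _ chi_pos eps_pos] An Lt
    by (simp add: T_def)
qed

context
  fixes mu Ml k Lt A tau and x0 x y xi xt yn xin xn v :: 'a and a taun :: real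
  assumes mu: "0 < mu" and Ml: "0 < Ml" and x0: "x0 \<in> H"
    and I: "run_inv mu x0 Ml k Lt A tau x y xi"
    and a: "a = (tau + sqrt (tau\<^sup>2 + 4 * tau * A * Lt)) / (2 * Lt)"
    and xt: "xt = (1 / (A + a)) *\<^sub>R (A *\<^sub>R y + a *\<^sub>R x)"
    and yn: "yn = prox_step f gf h H Lt xt"
    and ls: "f yn \<le> lin_f f gf yn xt + (1 - chi) * Lt / 4 * (norm (yn - xt))\<^sup>2"
    and xin: "xin = (if f yn + h yn \<le> f xi + h xi then yn else xi)"
    and taun: "taun = tau + a * mu / 2"
    and xn: "xn = (1 / taun) *\<^sub>R ((mu * a / 2) *\<^sub>R yn + tau *\<^sub>R x - a *\<^sub>R (Lt *\<^sub>R (xt - yn)))"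
    and v: "v = gf yn - gf xt + Lt *\<^sub>R (xt - yn)"
begin

lemma accepted_step_basics:
  shows "Ml \<le> Lt" "Lt \<le> Lmax Ml" "0 < tau" "0 < a" "Lt * a\<^sup>2 = tau * (A + a)"
    and "(A + a) *\<^sub>R xt = A *\<^sub>R y + a *\<^sub>R x" "yn \<in> H"
    and "xin \<in> H" "phi xin \<le> phi x0" "phi xin \<le> phi yn"
proof -
  have budget: "iterations_within_budget mu x0 Ml k Lt A" and A0: "0 \<le> A"
    and tau: "tau = 1 + mu * A / 2" and xi: "xi \<in> H" "phi xi \<le> phi x0"
    using I unfolding run_inv_def by blast+
  show Lt: "Ml \<le> Lt" "Lt \<le> Lmax Ml" using trial_value_bounds[OF Ml budget] by auto
  then have Ltp: "0 < Lt" using Ml by simp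
  show taup: "0 < tau" using tau mu A0 by (simp add: add_pos_nonneg)
  show ap: "0 < a" and "Lt * a\<^sup>2 = tau * (A + a)" using acg_stepsize_root[OF Ltp taup A0 a] by auto
  show "(A + a) *\<^sub>R xt = A *\<^sub>R y + a *\<^sub>R x" using A0 ap by (simp add: xt)
  show ynH: "yn \<in> H" using prox_step_minimizes(1)[OF Ltp] yn by simp
  show "xin \<in> H" "phi xin \<le> phi x0" "phi xin \<le> phi yn" using ynH xi by (auto simp: xin phi_def)
qed

lemma accepted_step_potential:
  assumes "mu \<le> mubar"
  shows "potential_bound x0 (A + a) taun xn ((A + a) * (phi yn + chi * Lt / 2 * (norm (yn - xt))\<^sup>2))"
proof -
  have "0 < Lt" using accepted_step_basics(1) Ml by simp
  moreover have "0 \<le> A" "y \<in> H" "potential_bound x0 A tau x (A * phi y)"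
    using I assms unfolding run_inv_def by blast+
  ultimately show ?thesis
    using potential_bound_step[OF _ assms _ _ _ _ _ accepted_step_basics(6) _ accepted_step_basics(7)
        refl _ ls _ taun xn] accepted_step_basics(3-5) prox_step_subgradient[OF _ yn] mu
    by simp
qed

lemma accepted_step_no_restart:
  assumes "mu \<le> mubar"
  shows "chi * (A + a) * Lt * (norm (yn - xt))\<^sup>2 \<le> (norm (xin - x0))\<^sup>2"
  using potential_bound_sublevel[OF accepted_step_potential[OF assms] _ _
      accepted_step_basics(8,10)] accepted_step_basics(3,4) I mu taun
  by (simp add: run_inv_def algebra_simps)

lemma accepted_step_continue:
  assumes not_restart: "\<not> (norm (xin - x0))\<^sup>2 < chi * (A + a) * Lt * (norm (yn - xt))\<^sup>2"
    and not_stop: "\<not> norm v \<le> eps"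
  shows "run_inv mu x0 Ml (Suc k) Lt (A + a) taun xn yn xin"
proof -
  obtain F s where k: "k = F + s" and Lt: "Lt = Ml * beta ^ F"
    and F: "0 < F \<longrightarrow> Ml * beta ^ (F - 1) < 2 * Lbar / (1 - chi)"
    and s0: "s = 0 \<longrightarrow> A = 0" and sp: "0 < s \<longrightarrow> (1 + 2 / Qc mu Ml) ^ (s - 1) \<le> A * Lt"
    using I unfolding run_inv_def iterations_within_budget_def by blast
  have A0: "0 \<le> A" and tau: "tau = 1 + mu * A / 2" using I unfolding run_inv_def by blast+
  note basics = accepted_step_basics
  have Ltp: "0 < Lt" and Ap: "0 < A + a" using basics(1,4) Ml A0 by auto
  have grow: "(1 + 2 / Qc mu Ml) ^ s \<le> (A + a) * Lt"
    using acg_growth_step[OF Ltp basics(2) mu A0 basics(4) _ Qc_def[of mu Ml]] basics(5) tau s0 sp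
    by simp
  have residual: "norm v \<le> (Lbar + Lmax Ml) * norm (yn - xt)"
    using gradient_residual_norm_le[of Lt yn xt] Ltp basics(2)
    by (simp add: v) (smt (verit) mult_right_mono norm_ge_zero)
  have near: "chi * ((A + a) * Lt) * (norm (yn - xt))\<^sup>2 \<le> 8 / mubar * (phi x0 - phi zstar)"
    using not_restart dist_sublevel_le[OF basics(8) x0 basics(9)] by (simp add: mult.assoc)
  have "int (Suc s) < accel_budget mu x0 Ml"
    using residual_small_after_budget[OF mu Ml _ grow Ap Ltp residual near] not_stop by linarith
  then have "iterations_within_budget mu x0 Ml (Suc k) Lt (A + a)"
    unfolding iterations_within_budget_def using k Lt F grow
    by (intro exI[of _ F] exI[of _ "Suc s"]) auto
  moreover have "mu \<le> mubar \<longrightarrow> potential_bound x0 (A + a) taun xn ((A + a) * phi yn)"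
    using accepted_step_potential potential_bound_mono Ap Ltp chi_pos
    by (smt (verit) mult_left_mono mult_nonneg_nonneg zero_le_power2 divide_nonneg_pos)
  ultimately show ?thesis
    using basics(7-9) A0 basics(4) taun tau by (simp add: run_inv_def algebra_simps)
qed

lemma run_inv_accept:
  "cycle_inv mu x0 Ml (Suc k)
     (if (norm (xin - x0))\<^sup>2 < chi * (A + a) * Lt * (norm (yn - xt))\<^sup>2 then CRestart xin Lt
      else if norm v \<le> eps then CStop yn v xin Lt
      else CRun Lt (A + a) taun xn yn xin)"
proof -
  have Ltp: "0 < Lt" using accepted_step_basics(1) Ml by simp
  consider "(norm (xin - x0))\<^sup>2 < chi * (A + a) * Lt * (norm (yn - xt))\<^sup>2"
    | "\<not> (norm (xin - x0))\<^sup>2 < chi * (A + a) * Lt * (norm (yn - xt))\<^sup>2" "norm v \<le> eps"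
    | "\<not> (norm (xin - x0))\<^sup>2 < chi * (A + a) * Lt * (norm (yn - xt))\<^sup>2" "\<not> norm v \<le> eps"
    by blast
  then show ?thesis
  proof cases
    case 1
    then have "\<not> mu \<le> mubar" using accepted_step_no_restart by force
    then show ?thesis using 1 accepted_step_basics by simp
  next
    case 2
    then show ?thesis
      using accepted_step_basics prox_residual_in_subdiff[OF Ltp yn] v by simp
  next
    case 3
    then show ?thesis using accepted_step_continue by simp
  qed
qed

end

lemma cycle_inv_step:
  assumes mu: "0 < mu" and Ml: "0 < Ml" and x0: "x0 \<in> H" and I: "cycle_inv mu x0 Ml k st"
  shows "cycle_inv mu x0 Ml (Suc k) (cycle_step f gf h H chi beta mu x0 eps st)"
proof (cases st)
  case (CRun Lt A tau x y xi)
  define a where "a = (tau + sqrt (tau\<^sup>2 + 4 * tau * A * Lt)) / (2 * Lt)"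
  define xt where "xt = (1 / (A + a)) *\<^sub>R (A *\<^sub>R y + a *\<^sub>R x)"
  define yn where "yn = prox_step f gf h H Lt xt"
  have run: "run_inv mu x0 Ml k Lt A tau x y xi" using I CRun by simp
  show ?thesis
  proof (cases "f yn \<le> lin_f f gf yn xt + (1 - chi) * Lt / 4 * (norm (yn - xt))\<^sup>2")
    case True
    from run_inv_accept[OF mu Ml x0 run a_def xt_def yn_def True refl refl refl refl] True
    show ?thesis
      unfolding CRun cycle_step_def cstate.case Let_def a_def[symmetric] xt_def[symmetric]
        yn_def[symmetric]
      by simp
  next
    case False
    from run_inv_backtrack[OF Ml run line_search_rejection_bound[OF False]] False
    show ?thesis
      unfolding CRun cycle_step_def cstate.case Let_def a_def[symmetric] xt_def[symmetric]
        yn_def[symmetric]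
      by simp
  qed
qed (use I in \<open>simp_all add: cycle_step_def\<close>)

lemma cycle_inv_run:
  assumes "0 < mu" "0 < Ml" "x0 \<in> H"
  shows "cycle_inv mu x0 Ml k (cycle_run f gf h H chi beta eps mu x0 Ml k)"
proof (induction k)
  case 0
  then show ?case using cycle_inv_init[OF assms] by (simp add: cycle_run_def)
next
  case (Suc k)
  then show ?case using cycle_inv_step[OF assms Suc] by (simp add: cycle_run_def)
qed

lemma cycle_outcome:
  assumes mu: "0 < mu" and Ml: "0 < Ml" and x0: "x0 \<in> H"
  defines "run \<equiv> cycle_run f gf h H chi beta eps mu x0 Ml"
    and "K \<equiv> backtrack_budget Ml + accel_budget mu x0 Ml"
  shows cycle_ends: "\<exists>k. int k \<le> K \<and> (\<forall>Lt A tau x y xi. run k \<noteq> CRun Lt A tau x y xi)"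
    and cycle_stop: "run k = CStop y v xi L \<Longrightarrow> phi xi \<le> phi x0 \<and> phi xi \<le> phi y
        \<and> Ml \<le> L \<and> L \<le> Lmax Ml \<and> v - gf y \<in> subdiff h H y \<and> norm v \<le> eps"
    and cycle_no_restart: "mu \<le> mubar \<Longrightarrow> run k \<noteq> CRestart z L"
    and cycle_stops: "mu \<le> mubar \<Longrightarrow> \<exists>k y v xi L. int k \<le> K \<and> run k = CStop y v xi L"
proof -
  have inv: "cycle_inv mu x0 Ml k (run k)" for k
    unfolding run_def by (rule cycle_inv_run[OF mu Ml x0])
  define k0 where "k0 = nat K"
  have k0: "int k0 = K"
    using backtrack_budget_nonneg[of Ml] accel_budget_ge_1[OF mu Ml, of x0] by (simp add: k0_def K_def)
  have not_run: "run k0 \<noteq> CRun Lt A tau x y xi" for Lt A tau x y xi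
  proof
    assume "run k0 = CRun Lt A tau x y xi"
    then have "iterations_within_budget mu x0 Ml k0 Lt A" using inv[of k0] by (simp add: run_inv_def)
    then show False using iterations_le_budget[OF Ml] k0 unfolding K_def by fastforce
  qed
  then show "\<exists>k. int k \<le> K \<and> (\<forall>Lt A tau x y xi. run k \<noteq> CRun Lt A tau x y xi)"
    using k0 by auto
  show "run k = CStop y v xi L \<Longrightarrow> phi xi \<le> phi x0 \<and> phi xi \<le> phi y
      \<and> Ml \<le> L \<and> L \<le> Lmax Ml \<and> v - gf y \<in> subdiff h H y \<and> norm v \<le> eps"
    using inv[of k] by simp
  show no_restart: "run k' \<noteq> CRestart z L" if "mu \<le> mubar" for k' z L
    using inv[of k'] that by auto
  show "mu \<le> mubar \<Longrightarrow> \<exists>k y v xi L. int k \<le> K \<and> run k = CStop y v xi L"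
    using not_run no_restart k0 by (cases "run k0") fastforce+
qed

lemma earlier_cycles:
  fixes z :: "nat \<Rightarrow> 'a" and Mbar Mlow mu :: "nat \<Rightarrow> real"
  assumes z0: "z 0 \<in> H" and M0: "0 < Mbar 0" and mu0: "0 < mu 0"
    and Mlow_range: "\<And>i. 1 \<le> i \<Longrightarrow> i \<le> l \<Longrightarrow>
           max (Mbar (i - 1) / 4) (Mbar 0) \<le> Mlow i \<and> Mlow i \<le> Mbar (i - 1)"
    and restart: "\<And>i. 1 \<le> i \<Longrightarrow> i < l \<Longrightarrow>
           (\<exists>k. cycle_run f gf h H chi beta eps (mu (i - 1)) (z (i - 1)) (Mlow i) k
                  = CRestart (z i) (Mbar i)) \<and> mu i = mu (i - 1) / 2"
    and "i < l"
  shows "z i \<in> H \<and> phi (z i) \<le> phi (z 0) \<and> Mbar i \<le> max (Mbar 0) (kappa * Lbar) \<and> 0 < mu i"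
  using \<open>i < l\<close>
proof (induction i)
  case 0
  then show ?case using z0 mu0 by simp
next
  case (Suc i)
  then have IH: "z i \<in> H" "phi (z i) \<le> phi (z 0)" "Mbar i \<le> max (Mbar 0) (kappa * Lbar)" "0 < mu i"
    by auto
  obtain k where "cycle_run f gf h H chi beta eps (mu i) (z i) (Mlow (Suc i)) k
      = CRestart (z (Suc i)) (Mbar (Suc i))" and mu: "mu (Suc i) = mu i / 2"
    using restart[of "Suc i"] Suc.prems by auto
  moreover have Mlow: "Mbar 0 \<le> Mlow (Suc i)" "Mlow (Suc i) \<le> Mbar i"
    using Mlow_range[of "Suc i"] Suc.prems by auto
  ultimately have "z (Suc i) \<in> H" "phi (z (Suc i)) \<le> phi (z i)" "Mbar (Suc i) \<le> Lmax (Mlow (Suc i))"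
    using cycle_inv_run[OF IH(4) _ IH(1), of "Mlow (Suc i)" k] M0 by auto
  then show ?case using IH Mlow mu unfolding Lmax_def by auto
qed

end

theorem proposition2p1:
  fixes f :: "'a::euclidean_space \<Rightarrow> real" and gf :: "'a \<Rightarrow> 'a"
    and h :: "'a \<Rightarrow> real" and H :: "'a set"
    and Lbar mubar chi beta mu0 M0 eps :: real and zstar :: 'a
    and z :: "nat \<Rightarrow> 'a" and Mbar Mlow mu :: "nat \<Rightarrow> real" and l :: nat
  assumes grad: "\<And>x. (f has_derivative (\<lambda>d. inner (gf x) d)) (at x)"
    and f_convex: "convex_on UNIV f"
    and f_lip: "\<And>x x'. norm (gf x' - gf x) \<le> Lbar * norm (x' - x)"
    and Lbar_pos: "Lbar > 0"
    and H_ne: "H \<noteq> {}" and H_convex: "convex H" and h_convex: "convex_on H h"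
    and h_lsc: "\<And>c. closed {x \<in> H. h x \<le> c}"
    and mubar_pos: "mubar > 0"
    and phi_sc: "strongly_convex_on H mubar (\<lambda>x. f x + h x)"
    and zstar: "zstar \<in> H" "\<And>x. x \<in> H \<Longrightarrow> f zstar + h zstar \<le> f x + h x"
    and chi: "0 < chi" "chi < 1" and beta: "beta > 1"
    and mu0: "mu0 > 0" and M0: "M0 > 0" and eps: "eps > 0"
    and z0: "z 0 \<in> H" and Mbar0: "Mbar 0 = M0" and mu_0: "mu 0 = mu0"
    and l: "l \<ge> 1"
    and Mlow_range: "\<And>i. 1 \<le> i \<Longrightarrow> i \<le> l \<Longrightarrow>
           max (Mbar (i - 1) / 4) (Mbar 0) \<le> Mlow i \<and> Mlow i \<le> Mbar (i - 1)"
    and prev_restart: "\<And>i. 1 \<le> i \<Longrightarrow> i < l \<Longrightarrow>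
           (\<exists>k. cycle_run f gf h H chi beta eps (mu (i - 1)) (z (i - 1)) (Mlow i) k
                  = CRestart (z i) (Mbar i)) \<and> mu i = mu (i - 1) / 2"
  defines "kappa \<equiv> 2 * beta / (1 - chi)"
    and "N \<equiv> (let K = 2 * beta / (1 - chi);
                  C = 8 / mubar * ((f (z (l - 1)) + h (z (l - 1))) - (f zstar + h zstar));
                  zeta = Lbar + max (Mlow l) (K * Lbar);
                  Q = 2 * sqrt 2 * sqrt (max (Mlow l) (K * Lbar) / mu (l - 1))
              in of_int (ceiling ((1 + Q) * logp 1 (C * zeta\<^sup>2 / (chi * eps\<^sup>2)) + 1))
                 + of_int (ceiling (logp 0 (2 * Lbar / ((1 - chi) * Mlow l)) / ln beta)))"
    and "run \<equiv> cycle_run f gf h H chi beta eps (mu (l - 1)) (z (l - 1)) (Mlow l)"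
  shows "(\<exists>k. real k \<le> N \<and> (\<forall>Lt A tau x y xi. run k \<noteq> CRun Lt A tau x y xi))
       \<and> (\<forall>k y v xi L. run k = CStop y v xi L \<longrightarrow>
            f xi + h xi \<le> min (f (z 0) + h (z 0)) (f y + h y)
            \<and> M0 \<le> L \<and> L \<le> max M0 (kappa * Lbar)
            \<and> v - gf y \<in> subdiff h H y \<and> norm v \<le> eps)
       \<and> (0 < mu (l - 1) \<and> mu (l - 1) \<le> mubar \<longrightarrow>
            (\<forall>k z' L'. run k \<noteq> CRestart z' L')
            \<and> (\<exists>k y v xi L. real k \<le> N \<and> run k = CStop y v xi L))"
proof -
  interpret C: rpf_cycle f gf Lbar h H mubar zstar chi beta eps
    by unfold_locales (use grad f_convex f_lip Lbar_pos H_ne H_convex h_convex h_lsc mubar_pos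
        phi_sc zstar chi beta eps in auto)
  define x0 m Ml where "x0 = z (l - 1)" and "m = mu (l - 1)" and "Ml = Mlow l"
  have prev: "x0 \<in> H" "C.phi x0 \<le> C.phi (z 0)" "Mbar (l - 1) \<le> max M0 (kappa * Lbar)" "0 < m"
    using C.earlier_cycles[OF z0 _ _ Mlow_range prev_restart, where i = "l - 1"] l M0 Mbar0 mu0 mu_0
    by (auto simp: x0_def m_def kappa_def C.kappa_def)
  have Ml: "M0 \<le> Ml" "Ml \<le> max M0 (kappa * Lbar)"
    using Mlow_range[of l] l prev(3) Mbar0 by (auto simp: Ml_def)
  have N: "N = real_of_int (C.backtrack_budget Ml + C.accel_budget m x0 Ml)"
    unfolding N_def by (simp add: Let_def C.accel_budget_def C.backtrack_budget_def C.Qc_def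
        C.Lmax_def C.kappa_def C.phi_def x0_def m_def Ml_def)
  have "run = cycle_run f gf h H chi beta eps m x0 Ml" by (simp add: run_def x0_def m_def Ml_def)
  have "0 < Ml" using Ml M0 by simp
  note outcome = C.cycle_outcome[OF prev(4) this prev(1), folded \<open>run = _\<close>]
  have real_k: "int k \<le> C.backtrack_budget Ml + C.accel_budget m x0 Ml \<Longrightarrow> real k \<le> N" for k
    unfolding N by (metis of_int_le_iff of_int_of_nat_eq)
  have L_le: "L \<le> C.Lmax Ml \<Longrightarrow> L \<le> max M0 (kappa * Lbar)" for L
    using Ml by (auto simp: C.Lmax_def C.kappa_def kappa_def)
  have stop: "f xi + h xi \<le> min (f (z 0) + h (z 0)) (f y + h y) \<and> M0 \<le> L
      \<and> L \<le> max M0 (kappa * Lbar) \<and> v - gf y \<in> subdiff h H y \<and> norm v \<le> eps"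
    if "run k = CStop y v xi L" for k y v xi L
    using outcome(2)[OF that] Ml prev(2) L_le unfolding C.phi_def by auto
  show ?thesis
    using outcome(1,3,4) real_k stop unfolding m_def by blast
qed

end
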